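(* Let $(\frac pq,\frac rs)$ be a Farey pair of order $n$ with $s>q\ge 2$, let $d=\lfloor n/q\rfloor$, $\alpha\in(0,1)$, $\beta=1-\alpha$, and $\phi_\alpha(t)=(t^q-\beta)^d-\alpha^dt^{qd-s}$. If $t_1$ and $t_2$ are roots of $\phi_\alpha$ with $|t_1|=|t_2|$, then either $t_2=t_1$ or $t_2=\overline{t_1}$.
   Context: $\mathcal{F}_n=\{p/q:0\le p<q\le n,\ \gcd(p,q)=1\}$; a Farey pair of order $n$ is a pair $(\frac pq,\frac rs)$ of elements of $\mathcal F_n$ with $\frac pq<\frac rs$ and no element of $\mathcal F_n$ strictly between them. $\phi_\alpha$ is regarded as a rational function of $t$. *)

theory Defs
  imports Complex_Main
begin

definition farey :: "nat \<Rightarrow> rat set" where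
  "farey n = {of_nat a / of_nat b | a b. a < b \<and> b \<le> n \<and> coprime a b}"

definition farey_pair :: "nat \<Rightarrow> nat \<Rightarrow> nat \<Rightarrow> nat \<Rightarrow> nat \<Rightarrow> bool" where
  "farey_pair n p q r s \<longleftrightarrow>
     p < q \<and> q \<le> n \<and> coprime p q \<and> r < s \<and> s \<le> n \<and> coprime r s \<and>
     (of_nat p / of_nat q :: rat) < of_nat r / of_nat s \<and>
     \<not> (\<exists>x\<in>farey n. of_nat p / of_nat q < x \<and> x < of_nat r / of_nat s)"

text \<open>phi_alpha(t) = (t^q - beta)^d - alpha^d t^(qd - s), beta = 1 - alpha, as a rational
  function of t (the exponent qd - s is an integer, possibly negative).\<close>
definition phi :: "nat \<Rightarrow> nat \<Rightarrow> nat \<Rightarrow> real \<Rightarrow> complex \<Rightarrow> complex" where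
  "phi q s d \<alpha> t = (t ^ q - complex_of_real (1 - \<alpha>)) ^ d
                    - complex_of_real (\<alpha> ^ d) * t powi (int (q * d) - int s)"

end

theory Submission
  imports Defs
begin

text \<open>Farey neighbours satisfy \<open>r q - p s = 1\<close>; writing \<open>d q - s = e\<close>, this gives the Bezout
  relation \<open>(r - p d) q + p e = 1\<close>. For a root \<open>t\<close> of \<open>\<phi>\<^sub>\<alpha>\<close> with given modulus, the equation
  \<open>|t\<^sup>q - \<beta>|\<^sup>d = \<alpha>\<^sup>d |t|\<^sup>e\<close> fixes \<open>|t\<^sup>q - \<beta>|\<close>, and together with \<open>|t\<^sup>q|\<close> this determines
  \<open>t\<^sup>q\<close> up to conjugation. Since \<open>\<phi>\<^sub>\<alpha>\<close> has real coefficients we may assume \<open>t\<^sub>1\<^sup>q = t\<^sub>2\<^sup>q\<close>;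
  the root equation then also gives \<open>t\<^sub>1\<^sup>e = t\<^sub>2\<^sup>e\<close>, and by the Bezout relation \<open>t\<^sub>1 = t\<^sub>2\<close>.\<close>

lemma farey_memI:
  assumes "0 < x" "x < y" "y \<le> int n" "coprime x y"
  shows "(of_int x / of_int y :: rat) \<in> farey n"
proof -
  have "coprime (nat x) (nat y)"
    using assms by (simp add: coprime_int_iff[symmetric])
  moreover have "(of_int x / of_int y :: rat) = of_nat (nat x) / of_nat (nat y)"
    using assms by simp
  ultimately show ?thesis
    unfolding farey_def using assms by (intro CollectI exI[of _ "nat x"] exI[of _ "nat y"]) auto
qed

text \<open>The standard construction of the successor \<open>x/y\<close> of \<open>p/q\<close> in the Farey sequence of order \<open>n\<close>.\<close>
lemma coprime_bezout_in_window:
  fixes p q n :: int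
  assumes "coprime p q" "0 < q"
  obtains x y where "q * x - p * y = 1" "n - q < y" "y \<le> n"
proof -
  obtain u v where uv: "u * p + v * q = 1"
    using bezout_int assms(1) by (metis coprime_iff_gcd_eq_1)
  define k where "k = (n + u) div q"
  have "q * (v + p * k) - p * (q * k - u) = 1"
    using uv by (simp add: algebra_simps)
  moreover have "q * k - u = n - (n + u) mod q"
    unfolding k_def by (simp add: minus_mod_eq_mult_div[symmetric] algebra_simps)
  moreover have "0 \<le> (n + u) mod q" "(n + u) mod q < q"
    using assms(2) by simp_all
  ultimately show thesis
    using that[of "v + p * k" "q * k - u"] by linarith
qed

lemma of_int_divide_less_iff:
  assumes "0 < b" "0 < d"
  shows "(of_int a / of_int b :: 'a :: linordered_field) < of_int c / of_int d \<longleftrightarrow> a * d < c * b"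
proof -
  have "(of_int a / of_int b :: 'a) < of_int c / of_int d \<longleftrightarrow>
        (of_int (a * d) :: 'a) < of_int (c * b)"
    using assms by (simp add: field_simps)
  then show ?thesis
    by (simp only: of_int_less_iff)
qed

text \<open>With \<open>x/y\<close> as above, \<open>s = q A + y B\<close> where \<open>A = x s - r y\<close> and \<open>B = r q - p s \<ge> 1\<close>:
  \<open>A > 0\<close> forces \<open>s > n\<close>, \<open>A < 0\<close> puts \<open>x/y\<close> strictly between the pair, and \<open>A = 0\<close> gives \<open>s | y\<close>,
  whence \<open>B = 1\<close>.\<close>
lemma farey_pair_det:
  assumes "farey_pair n p q r s"
  shows "int r * int q - int p * int s = 1"
proof -
  have "p < q" "q \<le> n" "coprime p q" "r < s" "s \<le> n" "coprime r s"
    and lt: "(of_nat p / of_nat q :: rat) < of_nat r / of_nat s"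
    and no_between: "\<not> (\<exists>z\<in>farey n. of_nat p / of_nat q < z \<and> z < (of_nat r / of_nat s :: rat))"
    using assms unfolding farey_pair_def by auto
  then have q_pos: "0 < int q" and s_pos: "0 < int s" and "coprime (int p) (int q)"
    by simp_all
  then obtain x y where xy: "int q * x - int p * y = 1" and y: "int n - int q < y" "y \<le> int n"
    using coprime_bezout_in_window by blast
  have y_pos: "0 < y"
    using y \<open>q \<le> n\<close> by linarith
  have "0 \<le> int p * y"
    using y_pos by simp
  then have "0 < 1 + int p * y"
    by simp
  then have "0 < int q * x"
    using xy by simp
  then have x_pos: "0 < x"
    using q_pos by (simp add: zero_less_mult_iff)
  define A where "A = x * int s - int r * y"
  define B where "B = int r * int q - int p * int s"
  have "int p * int s < int r * int q"
    using lt q_pos s_pos of_int_divide_less_iff[where 'a = rat, of "int q" "int s" "int p" "int r"]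
    by simp
  then have B_pos: "1 \<le> B"
    unfolding B_def by simp
  have s_eq: "int s = int q * A + y * B"
  proof -
    have "int s = int s * (int q * x - int p * y)"
      using xy by simp
    then show ?thesis
      unfolding A_def B_def by (simp add: algebra_simps)
  qed
  consider "A > 0" | "A < 0" | "A = 0"
    by linarith
  then show ?thesis
  proof cases
    case 1
    then have "int q \<le> int q * A" "y \<le> y * B"
      using q_pos y_pos B_pos by simp_all
    then show ?thesis
      using s_eq y \<open>s \<le> n\<close> by linarith
  next
    case 2
    then have "x * int s < int r * y"
      unfolding A_def by simp
    moreover have "int r * y < int s * y"
      using \<open>r < s\<close> y_pos by simp
    ultimately have "x * int s < y * int s"
      by (simp add: mult.commute)
    then have "x < y"
      using s_pos by (simp add: mult_less_cancel_right)
    moreover have "coprime x y"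
    proof (rule coprimeI)
      fix c
      assume "c dvd x" "c dvd y"
      then have "c dvd int q * x - int p * y"
        by simp
      then show "is_unit c"
        using xy by simp
    qed
    ultimately have "(of_int x / of_int y :: rat) \<in> farey n"
      using farey_memI x_pos y by blast
    moreover have "(of_int (int p) / of_int (int q) :: rat) < of_int x / of_int y"
    proof -
      have "int p * y < x * int q"
        using xy by (simp add: mult.commute[of x])
      then show ?thesis
        using of_int_divide_less_iff q_pos y_pos by blast
    qed
    moreover have "(of_int x / of_int y :: rat) < of_int (int r) / of_int (int s)"
      using of_int_divide_less_iff s_pos y_pos \<open>x * int s < int r * y\<close> by blast
    ultimately show ?thesis
      using no_between by auto
  next
    case 3
    then have "int r * y = int s * x"
      unfolding A_def by (simp add: mult.commute)
    then have "int s dvd int r * y"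
      by simp
    moreover have "coprime (int s) (int r)"
      using \<open>coprime r s\<close> by (simp add: coprime_commute)
    ultimately have "int s dvd y"
      by (simp add: coprime_dvd_mult_right_iff)
    then have "int s \<le> y"
      using y_pos by (simp add: zdvd_imp_le)
    moreover have "int s = y * B"
      using s_eq 3 by simp
    ultimately have "y * B \<le> y * 1"
      by simp
    then have "B \<le> 1"
      using y_pos by (simp only: mult_le_cancel_left_pos)
    then show ?thesis
      using B_pos unfolding B_def by simp
  qed
qed

lemma complex_eq_or_cnj_if_norm_eq:
  fixes w1 w2 :: complex and b :: real
  assumes "b \<noteq> 0" "norm w1 = norm w2" "norm (w1 - of_real b) = norm (w2 - of_real b)"
  shows "w1 = w2 \<or> w1 = cnj w2"
proof -
  have norm_shift: "norm (w - of_real b) ^ 2 = norm w ^ 2 - 2 * b * Re w + b ^ 2" for w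
    unfolding cmod_power2 by (simp add: power2_eq_square algebra_simps)
  have Re_eq: "Re w1 = Re w2"
    using norm_shift[of w1] norm_shift[of w2] assms by simp
  have "Re w1 ^ 2 + Im w1 ^ 2 = Re w2 ^ 2 + Im w2 ^ 2"
    using assms(2) by (simp add: cmod_power2[symmetric])
  then have "Im w1 ^ 2 = Im w2 ^ 2"
    using Re_eq by simp
  then have "Im w1 = Im w2 \<or> Im w1 = - Im w2"
    by (simp add: power2_eq_iff)
  then show ?thesis
    using Re_eq by (auto intro: complex_eqI)
qed

lemma eq_if_power_int_eq_bezout:
  fixes z1 z2 :: "'a :: field"
  assumes "z1 \<noteq> 0" "z2 \<noteq> 0" "z1 powi m = z2 powi m" "z1 powi k = z2 powi k"
    and "m * a + k * b = 1"
  shows "z1 = z2"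
proof -
  have "z powi (m * a + k * b) = (z powi m) powi a * (z powi k) powi b" if "z \<noteq> 0" for z :: 'a
    using that by (simp add: power_int_add power_int_mult)
  then show ?thesis
    using assms by (metis power_int_1_right)
qed

lemma phi_cnj: "phi q s d \<alpha> (cnj t) = cnj (phi q s d \<alpha> t)"
  unfolding phi_def by (simp add: complex_cnj_power_int)

lemma phi_root_eq:
  "phi q s d \<alpha> t = 0 \<longleftrightarrow>
     (t ^ q - of_real (1 - \<alpha>)) ^ d = of_real (\<alpha> ^ d) * t powi (int (q * d) - int s)"
  unfolding phi_def by simp

lemma phi_roots_power_eq_or_cnj:
  assumes "phi q s d \<alpha> t1 = 0" "phi q s d \<alpha> t2 = 0" "norm t1 = norm t2" "0 < d" "\<alpha> < 1"
  shows "t1 ^ q = t2 ^ q \<or> t1 ^ q = cnj t2 ^ q"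
proof -
  have "norm (t1 ^ q - of_real (1 - \<alpha>)) ^ d = norm (t2 ^ q - of_real (1 - \<alpha>)) ^ d"
    using assms(1,2) unfolding phi_root_eq
    by (metis assms(3) norm_mult norm_power norm_power_int)
  then have "norm (t1 ^ q - of_real (1 - \<alpha>)) = norm (t2 ^ q - of_real (1 - \<alpha>))"
    using assms(4) by (meson norm_ge_zero power_eq_imp_eq_base)
  moreover have "norm (t1 ^ q) = norm (t2 ^ q)"
    using assms(3) by (simp add: norm_power)
  moreover have "1 - \<alpha> \<noteq> 0"
    using assms(5) by simp
  ultimately have "t1 ^ q = t2 ^ q \<or> t1 ^ q = cnj (t2 ^ q)"
    using complex_eq_or_cnj_if_norm_eq by blast
  then show ?thesis
    by simp
qed

lemma phi_roots_eq_if_power_eq: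
  assumes "farey_pair n p q r s" "0 < \<alpha>"
    and "phi q s d \<alpha> t1 = 0" "phi q s d \<alpha> t2 = 0"
    and "t1 \<noteq> 0" "t2 \<noteq> 0" "t1 ^ q = t2 ^ q"
  shows "t1 = t2"
proof -
  let ?e = "int (q * d) - int s"
  have "of_real (\<alpha> ^ d) * t1 powi ?e = of_real (\<alpha> ^ d) * t2 powi ?e"
    using assms(3,4,7) unfolding phi_root_eq by metis
  then have "t1 powi ?e = t2 powi ?e"
    using assms(2) by simp
  moreover have "int q * (int r - int p * int d) + ?e * int p = 1"
    using farey_pair_det[OF assms(1)] by (simp add: algebra_simps)
  moreover have "t1 powi int q = t2 powi int q"
    using assms(7) by simp
  ultimately show ?thesis
    using eq_if_power_int_eq_bezout assms(5,6) by blast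
qed

theorem theorem5p2:
  fixes n p q r s :: nat and \<alpha> :: real and t1 t2 :: complex
  assumes "farey_pair n p q r s"
    and "s > q" and "q \<ge> 2"
    and "0 < \<alpha>" and "\<alpha> < 1"
    and "phi q s (n div q) \<alpha> t1 = 0"
    and "phi q s (n div q) \<alpha> t2 = 0"
    and "norm t1 = norm t2"
  shows "t2 = t1 \<or> t2 = cnj t1"
proof (cases "t1 = 0")
  case True
  then show ?thesis
    using assms(8) by simp
next
  case False
  then have "t2 \<noteq> 0"
    using assms(8) by auto
  have "0 < n div q"
    using assms(1,3) unfolding farey_pair_def by (simp add: div_greater_zero_iff)
  then have "t1 ^ q = t2 ^ q \<or> t1 ^ q = cnj t2 ^ q"
    using phi_roots_power_eq_or_cnj assms(5-8) by blast
  moreover have "phi q s (n div q) \<alpha> (cnj t2) = 0"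
    using assms(7) by (simp add: phi_cnj)
  ultimately have "t1 = t2 \<or> t1 = cnj t2"
    using phi_roots_eq_if_power_eq[OF assms(1,4,6)] assms(7) \<open>t1 \<noteq> 0\<close> \<open>t2 \<noteq> 0\<close>
    by (metis complex_cnj_zero_iff)
  then show ?thesis
    by auto
qed

end
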